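(* Let $r$ be even, $n=r+2$, and let $a,h_1,h_2:\mathbb F_2^r\to\mathbb F_2$. Define $\mathfrak f:\mathbb F_2^r\times\mathbb F_2^2\to\mathbb F_2$ by $\mathfrak f(x,y)=a(x)\oplus(h_1(x)\oplus y_1)(h_2(x)\oplus y_2)$. Suppose that any one of the following holds: (1) $a$ is bent, $h_1=h_2=g$ for some $g$, and $a\oplus g$ is semi-bent; (2) $a$ is bent, $h_1$ is affine, and $a\oplus h_2$ is semi-bent; (3) $W_a(u)\in\{0,\pm2^{r/2},\pm2^{(r+2)/2}\}$ for all $u$, and $h_1,h_2$ are affine; (4) $W_a(u)\in\{0,\pm2^{r/2},\pm2^{(r+2)/2}\}$ for all $u$, $h_1$ is affine, and $a\oplus h_2$ is bent or semi-bent. Then $W_{\mathfrak f}(u,v)\in\{0,\pm2^{n/2},\pm2^{(n+2)/2}\}$ for all $(u,v)\in\mathbb F_2^r\times\mathbb F_2^2$.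
   Context: $W_f(\omega)=\sum_x(-1)^{f(x)\oplus\omega\cdot x}$. For even $r$, $a:\mathbb F_2^r\to\mathbb F_2$ is bent if $|W_a(u)|=2^{r/2}$ for all $u$, and semi-bent if $W_a(u)\in\{0,\pm2^{(r+2)/2}\}$ for all $u$. Affine functions are $x\mapsto c\cdot x\oplus d$. *)

theory Defs
  imports Main
begin

text \<open>Vectors of F_2^r are modelled as functions nat => bool vanishing outside {..<r}.\<close>
definition vecs :: "nat \<Rightarrow> (nat \<Rightarrow> bool) set" where
  "vecs r = {x. \<forall>i. r \<le> i \<longrightarrow> \<not> x i}"

text \<open>Inner product u . x in F_2 (True = 1).\<close>
definition dot :: "nat \<Rightarrow> (nat \<Rightarrow> bool) \<Rightarrow> (nat \<Rightarrow> bool) \<Rightarrow> bool" where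
  "dot r u x = odd (card {i \<in> {..<r}. u i \<and> x i})"

definition walsh :: "nat \<Rightarrow> ((nat \<Rightarrow> bool) \<Rightarrow> bool) \<Rightarrow> (nat \<Rightarrow> bool) \<Rightarrow> int" where
  "walsh r f w = (\<Sum>x\<in>vecs r. if f x \<noteq> dot r w x then -1 else 1)"

definition walsh2 :: "nat \<Rightarrow> ((nat \<Rightarrow> bool) \<Rightarrow> (nat \<Rightarrow> bool) \<Rightarrow> bool)
    \<Rightarrow> (nat \<Rightarrow> bool) \<Rightarrow> (nat \<Rightarrow> bool) \<Rightarrow> int" where
  "walsh2 r f u v = (\<Sum>x\<in>vecs r. \<Sum>y\<in>vecs 2.
      if f x y \<noteq> (dot r u x \<noteq> dot 2 v y) then -1 else 1)"

definition bent :: "nat \<Rightarrow> ((nat \<Rightarrow> bool) \<Rightarrow> bool) \<Rightarrow> bool" where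
  "bent r a = (\<forall>u\<in>vecs r. \<bar>walsh r a u\<bar> = 2 ^ (r div 2))"

definition semi_bent :: "nat \<Rightarrow> ((nat \<Rightarrow> bool) \<Rightarrow> bool) \<Rightarrow> bool" where
  "semi_bent r a = (\<forall>u\<in>vecs r. walsh r a u \<in> {0, 2 ^ ((r + 2) div 2), - (2 ^ ((r + 2) div 2))})"

definition affine_fn :: "nat \<Rightarrow> ((nat \<Rightarrow> bool) \<Rightarrow> bool) \<Rightarrow> bool" where
  "affine_fn r h = (\<exists>c\<in>vecs r. \<exists>d. \<forall>x\<in>vecs r. h x = (dot r c x \<noteq> d))"

definition plateau3 :: "nat \<Rightarrow> ((nat \<Rightarrow> bool) \<Rightarrow> bool) \<Rightarrow> bool" where
  "plateau3 r a = (\<forall>u\<in>vecs r. walsh r a u \<in>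
     {0, 2 ^ (r div 2), - (2 ^ (r div 2)), 2 ^ ((r + 2) div 2), - (2 ^ ((r + 2) div 2))})"

text \<open>frak f (x,y) = a(x) xor (h1(x) xor y_1)(h2(x) xor y_2); y_1 = y 0, y_2 = y 1.\<close>
definition frakf :: "((nat \<Rightarrow> bool) \<Rightarrow> bool) \<Rightarrow> ((nat \<Rightarrow> bool) \<Rightarrow> bool) \<Rightarrow> ((nat \<Rightarrow> bool) \<Rightarrow> bool)
    \<Rightarrow> (nat \<Rightarrow> bool) \<Rightarrow> (nat \<Rightarrow> bool) \<Rightarrow> bool" where
  "frakf a h1 h2 x y = (a x \<noteq> ((h1 x \<noteq> y 0) \<and> (h2 x \<noteq> y 1)))"

end

theory Submission
  imports Defs
begin

text \<open>Summing out y \<in> F_2^2 gives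
  W_f(u,v) = \<plusminus>2 W_{a \<oplus> v_1 h_1 \<oplus> v_2 h_2}(u),
  so it suffices that the four functions a, a \<oplus> h_1, a \<oplus> h_2 and a \<oplus> h_1 \<oplus> h_2
  have Walsh values in {0, \<plusminus>2^{r/2}, \<plusminus>2^{(r+2)/2}}; doubling turns this set into the
  required one for n = r + 2. Adding an affine function c\<cdot>x \<oplus> d only shifts the Walsh
  spectrum by c and multiplies it by (-1)^d, so in cases (2)-(4) the four functions inherit
  the property from a and a \<oplus> h_2, and in case (1) a \<oplus> h_1 \<oplus> h_2 = a.\<close>

definition bits2 :: "bool \<Rightarrow> bool \<Rightarrow> nat \<Rightarrow> bool" where
  "bits2 p q = (\<lambda>i. if i = 0 then p else if i = 1 then q else False)"

lemma bits2_simps [simp]: "bits2 p q 0 = p" "bits2 p q (Suc 0) = q"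
  by (simp_all add: bits2_def)

lemma vecs_2_eq: "vecs 2 = case_prod bits2 ` {(False,False), (False,True), (True,False), (True,True)}"
proof
  show "vecs 2 \<subseteq> case_prod bits2 ` {(False,False), (False,True), (True,False), (True,True)}"
  proof
    fix y assume y: "y \<in> vecs 2"
    have "y = bits2 (y 0) (y 1)"
    proof
      fix i show "y i = bits2 (y 0) (y 1) i"
        using y by (cases "i < 2") (auto simp: vecs_def bits2_def less_2_cases_iff)
    qed
    thus "y \<in> case_prod bits2 ` {(False,False), (False,True), (True,False), (True,True)}"
      by (cases "y 0"; cases "y 1") auto
  qed
qed (auto simp: vecs_def bits2_def)

lemma inj_bits2: "inj (case_prod bits2)"
proof (rule injI, clarify)
  fix p q p' q' assume "bits2 p q = bits2 p' q'"
  from arg_cong[OF this, of "\<lambda>y. y 0"] arg_cong[OF this, of "\<lambda>y. y 1"]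
  show "p = p' \<and> q = q'" by simp
qed

lemma sum_vecs_2:
  "(\<Sum>y\<in>vecs 2. F y) =
     F (bits2 False False) + F (bits2 False True) + F (bits2 True False) + F (bits2 True True)"
  unfolding vecs_2_eq
  by (subst sum.reindex[OF inj_on_subset[OF inj_bits2 subset_UNIV]]) (simp add: add.assoc)

lemma dot_2: "dot 2 v y = ((v 0 \<and> y 0) \<noteq> (v 1 \<and> y 1))"
proof -
  have "{i \<in> {..<2::nat}. v i \<and> y i} =
      (if v 0 \<and> y 0 then {0} else {}) \<union> (if v 1 \<and> y 1 then {1} else {})"
    by (rule set_eqI) (case_tac "x = 0"; case_tac "x = 1"; auto)
  thus ?thesis unfolding dot_def by auto
qed

lemma walsh2_frakf:
  "walsh2 r (frakf a h1 h2) u v = (if v 0 \<and> v 1 then -2 else 2) *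
     walsh r (\<lambda>x. (a x \<noteq> (v 0 \<and> h1 x)) \<noteq> (v 1 \<and> h2 x)) u"
  unfolding walsh2_def walsh_def sum_distrib_left
proof (rule sum.cong[OF refl])
  fix x
  show "(\<Sum>y\<in>vecs 2. if frakf a h1 h2 x y \<noteq> (dot r u x \<noteq> dot 2 v y) then -1 else 1) =
    (if v 0 \<and> v 1 then -2 else 2) *
      (if ((a x \<noteq> (v 0 \<and> h1 x)) \<noteq> (v 1 \<and> h2 x)) \<noteq> dot r u x then -1 else (1::int))"
    unfolding sum_vecs_2 dot_2 frakf_def
    by (cases "a x"; cases "h1 x"; cases "h2 x"; cases "v 0"; cases "v 1"; cases "dot r u x")
      simp_all
qed

definition plateau_values :: "nat \<Rightarrow> int set" where
  "plateau_values r = {0, 2 ^ (r div 2), - (2 ^ (r div 2)), 2 ^ ((r + 2) div 2), - (2 ^ ((r + 2) div 2))}"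

lemma plateau3_iff: "plateau3 r a \<longleftrightarrow> (\<forall>u\<in>vecs r. walsh r a u \<in> plateau_values r)"
  unfolding plateau3_def plateau_values_def ..

lemma double_in_plateau_values:
  assumes "w \<in> plateau_values r" and "\<bar>c\<bar> = 2"
  shows "c * w \<in> plateau_values (r + 2)"
proof -
  have "c = 2 \<or> c = -2" using assms(2) by arith
  moreover have "(r + 2) div 2 = Suc (r div 2)" "(r + 2 + 2) div 2 = Suc ((r + 2) div 2)"
    by simp_all
  ultimately show ?thesis
    using assms(1) unfolding plateau_values_def by auto
qed

lemma bent_imp_plateau3:
  assumes "bent r a"
  shows "plateau3 r a"
  unfolding plateau3_iff
proof
  fix u assume "u \<in> vecs r"
  with assms have "\<bar>walsh r a u\<bar> = 2 ^ (r div 2)" unfolding bent_def by blast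
  hence "walsh r a u = 2 ^ (r div 2) \<or> walsh r a u = - (2 ^ (r div 2))" by arith
  thus "walsh r a u \<in> plateau_values r" unfolding plateau_values_def by blast
qed

lemma semi_bent_imp_plateau3: "semi_bent r a \<Longrightarrow> plateau3 r a"
  unfolding semi_bent_def plateau3_def by auto

lemma walsh_cong: "(\<And>x. x \<in> vecs r \<Longrightarrow> f x = g x) \<Longrightarrow> walsh r f u = walsh r g u"
  unfolding walsh_def by (rule sum.cong) auto

lemma plateau3_cong: "(\<And>x. x \<in> vecs r \<Longrightarrow> f x = g x) \<Longrightarrow> plateau3 r f = plateau3 r g"
  unfolding plateau3_def by (simp add: walsh_cong[of r f g])

lemma dot_xor_left: "dot r (\<lambda>i. u i \<noteq> c i) x = (dot r u x \<noteq> dot r c x)"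
proof -
  let ?A = "{i \<in> {..<r}. u i \<and> x i}" and ?B = "{i \<in> {..<r}. c i \<and> x i}"
  let ?D = "{i \<in> {..<r}. (u i \<noteq> c i) \<and> x i}"
  have "?A \<union> ?B = ?D \<union> (?A \<inter> ?B)" "?D \<inter> (?A \<inter> ?B) = {}" by auto
  hence "card (?A \<union> ?B) = card ?D + card (?A \<inter> ?B)"
    by (simp add: card_Un_disjoint)
  moreover have "card ?A + card ?B = card (?A \<union> ?B) + card (?A \<inter> ?B)"
    by (rule card_Un_Int) auto
  ultimately have "card ?A + card ?B = card ?D + 2 * card (?A \<inter> ?B)" by simp
  thus ?thesis unfolding dot_def by presburger
qed

lemma walsh_xor_affine:
  assumes "\<And>x. x \<in> vecs r \<Longrightarrow> h x = (dot r c x \<noteq> d)"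
  shows "walsh r (\<lambda>x. b x \<noteq> h x) u = (if d then -1 else 1) * walsh r b (\<lambda>i. u i \<noteq> c i)"
  unfolding walsh_def sum_distrib_left
proof (rule sum.cong[OF refl])
  fix x assume "x \<in> vecs r"
  with dot_xor_left[of r u c x] show "(if (b x \<noteq> h x) \<noteq> dot r u x then -1 else 1) =
      (if d then -1 else 1) * (if b x \<noteq> dot r (\<lambda>i. u i \<noteq> c i) x then -1 else (1::int))"
    by (auto simp: assms)
qed

lemma plateau3_xor_affine:
  assumes "plateau3 r b" and "affine_fn r h"
  shows "plateau3 r (\<lambda>x. b x \<noteq> h x)"
proof -
  obtain c d where c: "c \<in> vecs r" and h: "\<And>x. x \<in> vecs r \<Longrightarrow> h x = (dot r c x \<noteq> d)"
    using assms(2) unfolding affine_fn_def by blast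
  show ?thesis unfolding plateau3_iff
  proof
    fix u assume "u \<in> vecs r"
    with c have "(\<lambda>i. u i \<noteq> c i) \<in> vecs r" by (auto simp: vecs_def)
    with assms(1) have "walsh r b (\<lambda>i. u i \<noteq> c i) \<in> plateau_values r"
      unfolding plateau3_iff by blast
    moreover have "walsh r (\<lambda>x. b x \<noteq> h x) u = (if d then -1 else 1) * walsh r b (\<lambda>i. u i \<noteq> c i)"
      using h by (rule walsh_xor_affine)
    ultimately show "walsh r (\<lambda>x. b x \<noteq> h x) u \<in> plateau_values r"
      unfolding plateau_values_def by auto
  qed
qed

lemma walsh2_frakf_in_plateau_values:
  assumes "plateau3 r a" "plateau3 r (\<lambda>x. a x \<noteq> h1 x)" "plateau3 r (\<lambda>x. a x \<noteq> h2 x)"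
    and "plateau3 r (\<lambda>x. (a x \<noteq> h1 x) \<noteq> h2 x)" and "u \<in> vecs r"
  shows "walsh2 r (frakf a h1 h2) u v \<in> plateau_values (r + 2)"
proof -
  have "plateau3 r (\<lambda>x. (a x \<noteq> (v 0 \<and> h1 x)) \<noteq> (v 1 \<and> h2 x))"
    using assms(1-4) by (cases "v 0"; cases "v 1") simp_all
  with \<open>u \<in> vecs r\<close> have "walsh r (\<lambda>x. (a x \<noteq> (v 0 \<and> h1 x)) \<noteq> (v 1 \<and> h2 x)) u \<in> plateau_values r"
    unfolding plateau3_iff by blast
  thus ?thesis unfolding walsh2_frakf by (rule double_in_plateau_values) simp
qed

lemma walsh2_frakf_affine_h1:
  assumes "plateau3 r a" "affine_fn r h1" "plateau3 r (\<lambda>x. a x \<noteq> h2 x)" "u \<in> vecs r"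
  shows "walsh2 r (frakf a h1 h2) u v \<in> plateau_values (r + 2)"
proof -
  have "plateau3 r (\<lambda>x. (a x \<noteq> h2 x) \<noteq> h1 x)"
    by (rule plateau3_xor_affine[OF assms(3,2)])
  moreover have "(\<lambda>x. (a x \<noteq> h2 x) \<noteq> h1 x) = (\<lambda>x. (a x \<noteq> h1 x) \<noteq> h2 x)" by auto
  ultimately have "plateau3 r (\<lambda>x. (a x \<noteq> h1 x) \<noteq> h2 x)" by simp
  from walsh2_frakf_in_plateau_values[OF assms(1) plateau3_xor_affine[OF assms(1,2)] assms(3) this assms(4)]
  show ?thesis .
qed

lemma walsh2_frakf_equal_h:
  assumes "plateau3 r a" "\<And>x. x \<in> vecs r \<Longrightarrow> h1 x = g x \<and> h2 x = g x"
    and "plateau3 r (\<lambda>x. a x \<noteq> g x)" "u \<in> vecs r"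
  shows "walsh2 r (frakf a h1 h2) u v \<in> plateau_values (r + 2)"
proof -
  have g: "h1 x = g x" "h2 x = g x" if "x \<in> vecs r" for x
    using assms(2)[OF that] by simp_all
  have "plateau3 r (\<lambda>x. a x \<noteq> h1 x) \<longleftrightarrow> plateau3 r (\<lambda>x. a x \<noteq> g x)"
    by (rule plateau3_cong) (simp add: g)
  moreover have "plateau3 r (\<lambda>x. a x \<noteq> h2 x) \<longleftrightarrow> plateau3 r (\<lambda>x. a x \<noteq> g x)"
    by (rule plateau3_cong) (simp add: g)
  moreover have "plateau3 r (\<lambda>x. (a x \<noteq> h1 x) \<noteq> h2 x) \<longleftrightarrow> plateau3 r a"
    by (rule plateau3_cong) (auto simp: g)
  ultimately show ?thesis
    using assms(1,3,4) by (blast intro: walsh2_frakf_in_plateau_values)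
qed

theorem mainTheorem6:
  fixes r n :: nat and a h1 h2 :: "(nat \<Rightarrow> bool) \<Rightarrow> bool"
  assumes "even r" and "n = r + 2"
    and "(bent r a \<and> (\<exists>g. (\<forall>x\<in>vecs r. h1 x = g x \<and> h2 x = g x) \<and> semi_bent r (\<lambda>x. a x \<noteq> g x)))
       \<or> (bent r a \<and> affine_fn r h1 \<and> semi_bent r (\<lambda>x. a x \<noteq> h2 x))
       \<or> (plateau3 r a \<and> affine_fn r h1 \<and> affine_fn r h2)
       \<or> (plateau3 r a \<and> affine_fn r h1 \<and> (bent r (\<lambda>x. a x \<noteq> h2 x) \<or> semi_bent r (\<lambda>x. a x \<noteq> h2 x)))"
  shows "\<forall>u\<in>vecs r. \<forall>v\<in>vecs 2. walsh2 r (frakf a h1 h2) u v \<in>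
     {0, 2 ^ (n div 2), - (2 ^ (n div 2)), 2 ^ ((n + 2) div 2), - (2 ^ ((n + 2) div 2))}"
proof (intro ballI)
  fix u v assume u: "u \<in> vecs r"
  have "walsh2 r (frakf a h1 h2) u v \<in> plateau_values (r + 2)"
    using assms(3)
  proof (elim disjE conjE exE)
    fix g assume "bent r a" "\<forall>x\<in>vecs r. h1 x = g x \<and> h2 x = g x" "semi_bent r (\<lambda>x. a x \<noteq> g x)"
    with u show ?thesis
      by (intro walsh2_frakf_equal_h) (auto intro: bent_imp_plateau3 semi_bent_imp_plateau3)
  next
    assume "bent r a" "affine_fn r h1" "semi_bent r (\<lambda>x. a x \<noteq> h2 x)"
    with u show ?thesis
      by (intro walsh2_frakf_affine_h1 bent_imp_plateau3 semi_bent_imp_plateau3)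
  next
    assume "plateau3 r a" "affine_fn r h1" "affine_fn r h2"
    with u show ?thesis
      by (intro walsh2_frakf_affine_h1 plateau3_xor_affine)
  next
    assume "plateau3 r a" "affine_fn r h1" "bent r (\<lambda>x. a x \<noteq> h2 x)"
    with u show ?thesis
      by (blast intro: walsh2_frakf_affine_h1 bent_imp_plateau3)
  next
    assume "plateau3 r a" "affine_fn r h1" "semi_bent r (\<lambda>x. a x \<noteq> h2 x)"
    with u show ?thesis
      by (blast intro: walsh2_frakf_affine_h1 semi_bent_imp_plateau3)
  qed
  thus "walsh2 r (frakf a h1 h2) u v \<in>
     {0, 2 ^ (n div 2), - (2 ^ (n div 2)), 2 ^ ((n + 2) div 2), - (2 ^ ((n + 2) div 2))}"
    unfolding plateau_values_def assms(2) .
qed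

end
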